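(* Let $C$ be a $k$-context of the call-by-value $\lambda$-calculus and let $c_1,c_2\in\mathcal{T}(C)$ (so $c_1,c_2$ are resource $k$-contexts). Let $\tilde c_1$ be a rigid of $c_1$ and $\tilde c_2$ a rigid of $c_2$. For $i=1,\dots,k$ let $\vec v^{\,i}=\langle v^i_1,\dots,v^i_{\deg_{\Box_i}(c_1)}\rangle$ and $\vec u^{\,i}=\langle u^i_1,\dots,u^i_{\deg_{\Box_i}(c_2)}\rangle$ be lists of resource values. If $\tilde c_1[\vec v^{\,1},\dots,\vec v^{\,k}]=\tilde c_2[\vec u^{\,1},\dots,\vec u^{\,k}]$, then $c_1=c_2$ and $[\vec v^{\,i}]=[\vec u^{\,i}]$ for every $i=1,\dots,k$, where $[\vec w]$ denotes the finite multiset of the elements of the list $\vec w$.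
   Context: CbV $\lambda$-terms are ordinary $\lambda$-terms $M::=x\mid \lambda x.M\mid MM$; values are variables and abstractions. A $k$-context $C$ is a $\lambda$-term possibly containing holes $\Box_1,\dots,\Box_k$ (each any number of times); $C[M_1,\dots,M_k]$ denotes filling $\Box_i$ with $M_i$ (variable capture allowed). Resource CbV terms: resource values $v::=x\mid \lambda x.s$ and resource simple terms $s::= s_1s_2\mid [v_1,\dots,v_n]$ ($n\ge 0$, brackets denote finite multisets, "bags"), taken up to $\alpha$-equivalence. Resource $k$-contexts are defined the same way but additionally allowing $\Box_1,\dots,\Box_k$ as value-contexts: $c^v::=\Box_1\mid\dots\mid\Box_k\mid x\mid \lambda x.c^s$, $c^s::=c^s_1c^s_2\mid[c^v_1,\dots,c^v_n]$. $\deg_{\Box_i}(c)$ is the number of occurrences of $\Box_i$ in $c$. Taylor expansion $\mathcal{T}$ (sets of resource simple terms/contexts): $\mathcal{T}(x)=\{[x,\dots,x]\ (n \text{ copies})\mid n\in\mathbb N\}$, $\mathcal{T}(\Box_i)=\{[\Box_i,\dots,\Box_i]\ (n\text{ copies})\mid n\in\mathbb N\}$, $\mathcal{T}(\lambda x.M)=\{[\lambda x.s_1,\dots,\lambda x.s_n]\mid n\in\mathbb N,\ s_j\in\mathcal{T}(M)\}$, $\mathcal{T}(M_1M_2)=\{s_1s_2\mid s_j\in\mathcal{T}(M_j)\}$. Rigid contexts are built like resource contexts but with ordered lists $\langle\cdot,\dots,\cdot\rangle$ in place of bags. The rigids of a resource context $c$: $\mathrm{Rigid}(\Box_i)=\{\Box_i\}$,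 $\mathrm{Rigid}(x)=\{x\}$, $\mathrm{Rigid}(\lambda x.c_0)=\{\lambda x.\tilde c_0\mid\tilde c_0\in\mathrm{Rigid}(c_0)\}$, $\mathrm{Rigid}(c_0c_1)=\{\tilde c_0\tilde c_1\mid \tilde c_j\in\mathrm{Rigid}(c_j)\}$, $\mathrm{Rigid}([c_1,\dots,c_n])=\{\langle\tilde c_{\sigma(1)},\dots,\tilde c_{\sigma(n)}\rangle\mid\sigma\text{ a permutation},\ \tilde c_j\in\mathrm{Rigid}(c_j)\}$. Filling a rigid $\tilde c$ of $c$ with lists $\vec v^{\,i}$ of resource values of length $\deg_{\Box_i}(c)$, producing a resource term $\tilde c[\vec v^{\,1},\dots,\vec v^{\,k}]$: for $\tilde c=\Box_i$, the result is the unique value in $\vec v^{\,i}$ (others lists empty); for $x$ it is $x$; $(\lambda x.\tilde c_0)[\vec v^{\,1},\dots,\vec v^{\,k}]=\lambda x.\tilde c_0[\vec v^{\,1},\dots,\vec v^{\,k}]$; for $\tilde c_1\tilde c_2$, split each $\vec v^{\,i}=\vec w^{\,i1}\vec w^{\,i2}$ (concatenation) with $\vec w^{\,ij}$ of length $\deg_{\Box_i}(c_j)$, and the result is $\tilde c_1[\vec w^{\,11},\dots,\vec w^{\,k1}]\,\tilde c_2[\vec w^{\,12},\dots,\vec w^{\,k2}]$; for $\langle\tilde c_{\sigma(1)},\dots,\tilde c_{\sigma(n)}\rangle$, split each $\vec v^{\,i}=\vec w^{\,i1}\cdots\vec w^{\,in}$ with $\vec w^{\,ij}$ of length $\deg_{\Box_i}(c_{\sigma(j)})$,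 and the result is the bag $[\tilde c_{\sigma(1)}[\vec w^{\,11},\dots,\vec w^{\,k1}],\dots,\tilde c_{\sigma(n)}[\vec w^{\,1n},\dots,\vec w^{\,kn}]]$. *)

theory Defs
  imports Main "HOL-Library.Multiset"
begin

text \<open>Terms are represented with de Bruijn indices (so terms are taken up to
alpha-equivalence); filling of holes is literal plugging (capture allowed).
Hole \<open>Box_(i+1)\<close> of the paper is represented by index \<open>i\<close>.\<close>

datatype lctx = LVar nat | LHole nat | LLam lctx | LApp lctx lctx

fun lholes :: "lctx \<Rightarrow> nat set" where
  "lholes (LVar x) = {}"
| "lholes (LHole i) = {i}"
| "lholes (LLam M) = lholes M"
| "lholes (LApp M N) = lholes M \<union> lholes N"

section \<open>Resource contexts (resource terms = resource contexts without holes)\<close>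

datatype rval = RVar nat | RHole nat | RLam rsim
     and rsim = RApp rsim rsim | RBag "rval multiset"

inductive rv_hole_free :: "rval \<Rightarrow> bool" and rs_hole_free :: "rsim \<Rightarrow> bool" where
  "rv_hole_free (RVar x)"
| "rs_hole_free s \<Longrightarrow> rv_hole_free (RLam s)"
| "rs_hole_free s \<Longrightarrow> rs_hole_free t \<Longrightarrow> rs_hole_free (RApp s t)"
| "(\<forall>v\<in>#b. rv_hole_free v) \<Longrightarrow> rs_hole_free (RBag b)"

abbreviation resource_value :: "rval \<Rightarrow> bool" where
  "resource_value v \<equiv> rv_hole_free v"

inductive rv_deg :: "nat \<Rightarrow> rval \<Rightarrow> nat \<Rightarrow> bool" and rs_deg :: "nat \<Rightarrow> rsim \<Rightarrow> nat \<Rightarrow> bool" where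
  "rv_deg i (RVar x) 0"
| "rv_deg i (RHole j) (if i = j then 1 else 0)"
| "rs_deg i s n \<Longrightarrow> rv_deg i (RLam s) n"
| "rs_deg i s n \<Longrightarrow> rs_deg i t m \<Longrightarrow> rs_deg i (RApp s t) (n + m)"
| "list_all2 (rv_deg i) vs ns \<Longrightarrow> rs_deg i (RBag (mset vs)) (sum_list ns)"

definition deg :: "nat \<Rightarrow> rsim \<Rightarrow> nat" where
  "deg i c = (THE n. rs_deg i c n)"

fun taylor :: "lctx \<Rightarrow> rsim set" where
  "taylor (LVar x) = {RBag (replicate_mset n (RVar x)) | n. True}"
| "taylor (LHole i) = {RBag (replicate_mset n (RHole i)) | n. True}"
| "taylor (LLam M) = {RBag (mset (map RLam ss)) | ss. set ss \<subseteq> taylor M}"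
| "taylor (LApp M N) = {RApp s t | s t. s \<in> taylor M \<and> t \<in> taylor N}"

datatype gval = GVar nat | GHole nat | GLam gsim
     and gsim = GApp gsim gsim | GList "gval list"

inductive rigid_v :: "gval \<Rightarrow> rval \<Rightarrow> bool" and rigid_s :: "gsim \<Rightarrow> rsim \<Rightarrow> bool" where
  "rigid_v (GVar x) (RVar x)"
| "rigid_v (GHole i) (RHole i)"
| "rigid_s g c \<Longrightarrow> rigid_v (GLam g) (RLam c)"
| "rigid_s g1 c1 \<Longrightarrow> rigid_s g2 c2 \<Longrightarrow> rigid_s (GApp g1 g2) (RApp c1 c2)"
| "list_all2 rigid_v gs cs \<Longrightarrow> rigid_s (GList gs) (RBag (mset cs))"

text \<open>Degrees of rigids (they coincide with the degrees of the underlying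
resource context and are used to split the lists when filling).\<close>

fun gv_deg :: "nat \<Rightarrow> gval \<Rightarrow> nat" and gs_deg :: "nat \<Rightarrow> gsim \<Rightarrow> nat" where
  "gv_deg i (GVar x) = 0"
| "gv_deg i (GHole j) = (if i = j then 1 else 0)"
| "gv_deg i (GLam g) = gs_deg i g"
| "gs_deg i (GApp g1 g2) = gs_deg i g1 + gs_deg i g2"
| "gs_deg i (GList gs) = sum_list (map (gv_deg i) gs)"

definition take_all :: "(nat \<Rightarrow> nat) \<Rightarrow> rval list list \<Rightarrow> rval list list" where
  "take_all d vs = map (\<lambda>i. take (d i) (vs ! i)) [0..<length vs]"

definition drop_all :: "(nat \<Rightarrow> nat) \<Rightarrow> rval list list \<Rightarrow> rval list list" where
  "drop_all d vs = map (\<lambda>i. drop (d i) (vs ! i)) [0..<length vs]"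

text \<open>Filling a rigid with lists of resource values; \<open>vs ! i\<close> is the list for hole i.\<close>
fun fill_v :: "gval \<Rightarrow> rval list list \<Rightarrow> rval"
and fill_s :: "gsim \<Rightarrow> rval list list \<Rightarrow> rsim"
and fill_l :: "gval list \<Rightarrow> rval list list \<Rightarrow> rval list" where
  "fill_v (GVar x) vs = RVar x"
| "fill_v (GHole i) vs = hd (vs ! i)"
| "fill_v (GLam g) vs = RLam (fill_s g vs)"
| "fill_s (GApp g1 g2) vs =
     RApp (fill_s g1 (take_all (\<lambda>i. gs_deg i g1) vs)) (fill_s g2 (drop_all (\<lambda>i. gs_deg i g1) vs))"
| "fill_s (GList gs) vs = RBag (mset (fill_l gs vs))"
| "fill_l [] vs = []"
| "fill_l (g # gs) vs =
     fill_v g (take_all (\<lambda>i. gv_deg i g) vs) # fill_l gs (drop_all (\<lambda>i. gv_deg i g) vs)"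

end

theory Submission
  imports Defs
begin

text \<open>We show, by induction on \<open>C\<close>, that for rigids of elements of \<open>\<T>(C)\<close> the filled term
determines the underlying resource context and, for every hole, the multiset of values plugged in. Bags are the heart of the matter: a
filled bag is the multiset of the filled elements of the rigid list, each filled with its own
chunk of the value lists. Since the Taylor expansion makes all elements of a bag share the shape
of the same subterm of \<open>C\<close>, the induction hypothesis says that two chunks filling elements to the
same value agree as (resource context, argument multisets); hence the two multisets of such pairs
coincide, and summing the argument multisets of the chunks gives back \<open>mset (vs ! i)\<close>.\<close>

primrec rv_of_gv :: "gval \<Rightarrow> rval" and rs_of_gs :: "gsim \<Rightarrow> rsim" where
  "rv_of_gv (GVar x) = RVar x"
| "rv_of_gv (GHole i) = RHole i"
| "rv_of_gv (GLam g) = RLam (rs_of_gs g)"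
| "rs_of_gs (GApp a b) = RApp (rs_of_gs a) (rs_of_gs b)"
| "rs_of_gs (GList gs) = RBag (mset (map rv_of_gv gs))"

lemma rigid_eq_rs_of_gs:
  "rigid_v g c \<Longrightarrow> c = rv_of_gv g" "rigid_s h s \<Longrightarrow> s = rs_of_gs h"
proof (induction rule: rigid_v_rigid_s.inducts)
  case (5 gs cs)
  then have "cs = map rv_of_gv gs" by (induct rule: list_all2_induct) auto
  then show ?case by simp
qed auto

lemma rv_of_gv_eq_iff [simp]:
  "rv_of_gv g = RVar x \<longleftrightarrow> g = GVar x"
  "rv_of_gv g = RHole j \<longleftrightarrow> g = GHole j"
  "rv_of_gv g = RLam s \<longleftrightarrow> (\<exists>h. g = GLam h \<and> rs_of_gs h = s)"
  by (cases g; auto)+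

lemma rs_of_gs_eq_RBagD:
  "rs_of_gs g = RBag b \<Longrightarrow> set_mset b \<subseteq> V \<Longrightarrow> g \<in> GList ` lists (rv_of_gv -` V)"
  by (cases g) (auto intro!: image_eqI)

text \<open>Since \<^const>\<open>deg\<close> is defined by \<open>THE\<close>, we need that \<^const>\<open>rs_deg\<close> is functional.\<close>

primrec hole_count_v :: "nat \<Rightarrow> rval \<Rightarrow> nat" and hole_count_s :: "nat \<Rightarrow> rsim \<Rightarrow> nat" where
  "hole_count_v i (RVar x) = 0"
| "hole_count_v i (RHole j) = (if i = j then 1 else 0)"
| "hole_count_v i (RLam s) = hole_count_s i s"
| "hole_count_s i (RApp a b) = hole_count_s i a + hole_count_s i b"
| "hole_count_s i (RBag b) = sum_mset (image_mset (hole_count_v i) b)"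

lemma rv_deg_rs_deg_eq_hole_count:
  "rv_deg i c n \<Longrightarrow> n = hole_count_v i c" "rs_deg i s m \<Longrightarrow> m = hole_count_s i s"
proof (induction rule: rv_deg_rs_deg.inducts)
  case (5 i vs ns)
  then have "ns = map (hole_count_v i) vs" by (induct rule: list_all2_induct) auto
  then show ?case by (simp flip: sum_mset_sum_list)
qed auto

lemma rigid_deg:
  "rigid_v g c \<Longrightarrow> rv_deg i c (gv_deg i g)" "rigid_s h s \<Longrightarrow> rs_deg i s (gs_deg i h)"
proof (induction rule: rigid_v_rigid_s.inducts)
  case (2 j)
  show ?case using rv_deg_rs_deg.intros(2)[of i j] by simp
next
  case (5 gs cs)
  then have "list_all2 (rv_deg i) cs (map (gv_deg i) gs)" by (induct rule: list_all2_induct) auto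
  then show ?case using rv_deg_rs_deg.intros(5) by fastforce
qed (auto intro: rv_deg_rs_deg.intros)

lemma deg_rigid: "rigid_s g c \<Longrightarrow> deg i c = gs_deg i g"
  unfolding deg_def using rigid_deg(2) rv_deg_rs_deg_eq_hole_count(2) by (metis the_equality)

lemma image_mset_eq_factor:
  assumes "image_mset f A = image_mset f B"
    and "\<And>x y. x \<in># A \<Longrightarrow> y \<in># B \<Longrightarrow> f x = f y \<Longrightarrow> h x = h y"
  shows "image_mset h A = image_mset h B"
  using assms
proof (induction A arbitrary: B)
  case empty
  then show ?case by simp
next
  case (add x A)
  have "f x \<in># image_mset f B" using add.prems(1) by (metis image_mset_add_mset union_single_eq_member)
  then obtain y where y: "y \<in># B" "f y = f x" by auto
  then obtain B' where B: "B = add_mset y B'" by (metis multi_member_split)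
  have "image_mset h A = image_mset h B'"
    using add.prems y B by (intro add.IH) auto
  moreover have "h x = h y" using add.prems(2) y by auto
  ultimately show ?case using B by simp
qed

lemma length_take_all [simp]: "length (take_all d vs) = length vs"
  by (simp add: take_all_def)

lemma length_drop_all [simp]: "length (drop_all d vs) = length vs"
  by (simp add: drop_all_def)

lemma nth_take_all [simp]: "i < length vs \<Longrightarrow> take_all d vs ! i = take (d i) (vs ! i)"
  by (simp add: take_all_def)

lemma nth_drop_all [simp]: "i < length vs \<Longrightarrow> drop_all d vs ! i = drop (d i) (vs ! i)"
  by (simp add: drop_all_def)

lemma mset_take_all_drop_all:
  "i < length vs \<Longrightarrow> mset (vs ! i) = mset (take_all d vs ! i) + mset (drop_all d vs ! i)"
  by (metis append_take_drop_id mset_append nth_drop_all nth_take_all)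

definition sized :: "nat \<Rightarrow> (nat \<Rightarrow> nat) \<Rightarrow> rval list list \<Rightarrow> bool" where
  "sized k d vs \<longleftrightarrow> length vs = k \<and> (\<forall>i<k. length (vs ! i) = d i)"

definition fill_determines_v :: "nat \<Rightarrow> gval set \<Rightarrow> bool" where
  "fill_determines_v k G \<longleftrightarrow> (\<forall>g\<in>G. \<forall>g'\<in>G. \<forall>w w'.
     sized k (\<lambda>i. gv_deg i g) w \<longrightarrow> sized k (\<lambda>i. gv_deg i g') w' \<longrightarrow> fill_v g w = fill_v g' w' \<longrightarrow>
     rv_of_gv g = rv_of_gv g' \<and> (\<forall>i<k. mset (w ! i) = mset (w' ! i)))"

definition fill_determines_s :: "nat \<Rightarrow> gsim set \<Rightarrow> bool" where
  "fill_determines_s k G \<longleftrightarrow> (\<forall>g\<in>G. \<forall>g'\<in>G. \<forall>w w'.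
     sized k (\<lambda>i. gs_deg i g) w \<longrightarrow> sized k (\<lambda>i. gs_deg i g') w' \<longrightarrow> fill_s g w = fill_s g' w' \<longrightarrow>
     rs_of_gs g = rs_of_gs g' \<and> (\<forall>i<k. mset (w ! i) = mset (w' ! i)))"

lemma fill_determines_vD:
  "fill_determines_v k G \<Longrightarrow> g \<in> G \<Longrightarrow> g' \<in> G \<Longrightarrow>
   sized k (\<lambda>i. gv_deg i g) w \<Longrightarrow> sized k (\<lambda>i. gv_deg i g') w' \<Longrightarrow> fill_v g w = fill_v g' w' \<Longrightarrow>
   rv_of_gv g = rv_of_gv g' \<and> (\<forall>i<k. mset (w ! i) = mset (w' ! i))"
  unfolding fill_determines_v_def by blast

lemma fill_determines_sD:
  "fill_determines_s k G \<Longrightarrow> g \<in> G \<Longrightarrow> g' \<in> G \<Longrightarrow>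
   sized k (\<lambda>i. gs_deg i g) w \<Longrightarrow> sized k (\<lambda>i. gs_deg i g') w' \<Longrightarrow> fill_s g w = fill_s g' w' \<Longrightarrow>
   rs_of_gs g = rs_of_gs g' \<and> (\<forall>i<k. mset (w ! i) = mset (w' ! i))"
  unfolding fill_determines_s_def by blast

lemma fill_determines_s_subset:
  "G \<subseteq> H \<Longrightarrow> fill_determines_s k H \<Longrightarrow> fill_determines_s k G"
  unfolding fill_determines_s_def by blast

lemma fill_determines_GVar: "fill_determines_v k {GVar x}"
  unfolding fill_determines_v_def sized_def by simp

lemma fill_determines_GHole: "fill_determines_v k {GHole j}"
proof -
  have "mset (w ! i) = mset (w' ! i)"
    if "\<forall>i<k. length (w ! i) = gv_deg i (GHole j)" "\<forall>i<k. length (w' ! i) = gv_deg i (GHole j)"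
      and fill: "fill_v (GHole j) w = fill_v (GHole j) w'" and "i < k"
    for w w' :: "rval list list" and i
  proof -
    have "length (w ! i) = (if i = j then 1 else 0)" "length (w' ! i) = (if i = j then 1 else 0)"
      using that by auto
    moreover have "i = j \<Longrightarrow> hd (w ! i) = hd (w' ! i)" using fill by simp
    ultimately show ?thesis by (cases "w ! i"; cases "w' ! i") (auto split: if_splits)
  qed
  then show ?thesis unfolding fill_determines_v_def sized_def by simp
qed

lemma fill_determines_GLam:
  assumes "fill_determines_s k G"
  shows "fill_determines_v k (GLam ` G)"
  unfolding fill_determines_v_def
proof (intro ballI allI impI)
  fix g g' w w'
  assume "g \<in> GLam ` G" "g' \<in> GLam ` G"
  then obtain h h' where g: "g = GLam h" "h \<in> G" and g': "g' = GLam h'" "h' \<in> G" by auto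
  assume "sized k (\<lambda>i. gv_deg i g) w" "sized k (\<lambda>i. gv_deg i g') w'" "fill_v g w = fill_v g' w'"
  then have "rs_of_gs h = rs_of_gs h' \<and> (\<forall>i<k. mset (w ! i) = mset (w' ! i))"
    using g g' by (intro fill_determines_sD[OF assms]) simp_all
  then show "rv_of_gv g = rv_of_gv g' \<and> (\<forall>i<k. mset (w ! i) = mset (w' ! i))"
    using g g' by simp
qed

lemma fill_determines_GApp:
  assumes G: "fill_determines_s k G" and H: "fill_determines_s k H"
  shows "fill_determines_s k (case_prod GApp ` (G \<times> H))"
  unfolding fill_determines_s_def
proof (intro ballI allI impI)
  fix g g' w w'
  assume "g \<in> case_prod GApp ` (G \<times> H)" "g' \<in> case_prod GApp ` (G \<times> H)"
  then obtain a b a' b' where g: "g = GApp a b" "a \<in> G" "b \<in> H"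
    and g': "g' = GApp a' b'" "a' \<in> G" "b' \<in> H" by auto
  assume w: "sized k (\<lambda>i. gs_deg i g) w" and w': "sized k (\<lambda>i. gs_deg i g') w'"
    and fill: "fill_s g w = fill_s g' w'"
  let ?d = "\<lambda>i. gs_deg i a" and ?d' = "\<lambda>i. gs_deg i a'"
  have "rs_of_gs a = rs_of_gs a' \<and> (\<forall>i<k. mset (take_all ?d w ! i) = mset (take_all ?d' w' ! i))"
    using g g' w w' fill by (intro fill_determines_sD[OF G]) (simp_all add: sized_def)
  moreover have "rs_of_gs b = rs_of_gs b' \<and> (\<forall>i<k. mset (drop_all ?d w ! i) = mset (drop_all ?d' w' ! i))"
    using g g' w w' fill by (intro fill_determines_sD[OF H]) (simp_all add: sized_def)
  moreover have "length w = k" "length w' = k" using w w' by (simp_all add: sized_def)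
  ultimately show "rs_of_gs g = rs_of_gs g' \<and> (\<forall>i<k. mset (w ! i) = mset (w' ! i))"
    using g g' by (simp add: mset_take_all_drop_all[of _ w ?d] mset_take_all_drop_all[of _ w' ?d'])
qed

fun chunks :: "gval list \<Rightarrow> rval list list \<Rightarrow> rval list list list" where
  "chunks [] vs = []"
| "chunks (g # gs) vs = take_all (\<lambda>i. gv_deg i g) vs # chunks gs (drop_all (\<lambda>i. gv_deg i g) vs)"

lemma length_chunks [simp]: "length (chunks gs vs) = length gs"
  by (induction gs arbitrary: vs) auto

lemma fill_l_eq_map2_chunks: "fill_l gs vs = map2 fill_v gs (chunks gs vs)"
  by (induction gs arbitrary: vs) auto

lemma sized_drop_all_Cons:
  "sized k (\<lambda>i. gs_deg i (GList (g # gs))) vs \<Longrightarrow>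
   sized k (\<lambda>i. gs_deg i (GList gs)) (drop_all (\<lambda>i. gv_deg i g) vs)"
  by (simp add: sized_def)

lemma sized_chunks:
  "sized k (\<lambda>i. gs_deg i (GList gs)) vs \<Longrightarrow> (g, w) \<in> set (zip gs (chunks gs vs)) \<Longrightarrow>
   sized k (\<lambda>i. gv_deg i g) w"
proof (induction gs arbitrary: vs)
  case (Cons a gs)
  then consider "(g, w) = (a, take_all (\<lambda>i. gv_deg i a) vs)"
    | "(g, w) \<in> set (zip gs (chunks gs (drop_all (\<lambda>i. gv_deg i a) vs)))" by auto
  then show ?case
  proof cases
    case 1
    with Cons.prems(1) show ?thesis by (simp add: sized_def)
  next
    case 2
    then show ?thesis by (rule Cons.IH[OF sized_drop_all_Cons[OF Cons.prems(1)]])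
  qed
qed simp

lemma mset_nth_eq_sum_chunks:
  "sized k (\<lambda>i. gs_deg i (GList gs)) vs \<Longrightarrow> i < k \<Longrightarrow>
   mset (vs ! i) = (\<Sum>w\<leftarrow>chunks gs vs. mset (w ! i))"
proof (induction gs arbitrary: vs)
  case Nil
  then show ?case by (simp add: sized_def)
next
  case (Cons a gs)
  let ?d = "\<lambda>i. gv_deg i a"
  have "i < length vs" using Cons.prems by (simp add: sized_def)
  then have "mset (vs ! i) = mset (take_all ?d vs ! i) + mset (drop_all ?d vs ! i)"
    by (rule mset_take_all_drop_all)
  also have "mset (drop_all ?d vs ! i) = (\<Sum>w\<leftarrow>chunks gs (drop_all ?d vs). mset (w ! i))"
    using Cons.IH[OF sized_drop_all_Cons] Cons.prems by blast
  finally show ?case by simp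
qed

lemma fill_determines_GList:
  assumes G: "fill_determines_v k G"
  shows "fill_determines_s k (GList ` lists G)"
  unfolding fill_determines_s_def
proof (intro ballI allI impI)
  fix g g' w w'
  assume "g \<in> GList ` lists G" "g' \<in> GList ` lists G"
  then obtain gs gs' where g: "g = GList gs" "set gs \<subseteq> G" and g': "g' = GList gs'" "set gs' \<subseteq> G"
    by auto
  assume w: "sized k (\<lambda>i. gs_deg i g) w" and w': "sized k (\<lambda>i. gs_deg i g') w'"
    and fill: "fill_s g w = fill_s g' w'"
  let ?xs = "mset (zip gs (chunks gs w))" and ?ys = "mset (zip gs' (chunks gs' w'))"
  have fills: "image_mset (case_prod fill_v) ?xs = image_mset (case_prod fill_v) ?ys"
    using fill g g' by (simp add: fill_l_eq_map2_chunks)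
  have agree: "rv_of_gv (fst x) = rv_of_gv (fst y) \<and> (\<forall>i<k. mset (snd x ! i) = mset (snd y ! i))"
    if "x \<in># ?xs" "y \<in># ?ys" "case_prod fill_v x = case_prod fill_v y" for x y
  proof -
    obtain a u b v where x: "x = (a, u)" and y: "y = (b, v)" by fastforce
    have "a \<in> G" "b \<in> G" using that g(2) g'(2) x y by (auto dest: set_zip_leftD)
    moreover have "sized k (\<lambda>i. gv_deg i a) u" "sized k (\<lambda>i. gv_deg i b) v"
      using that w w' g g' x y by (auto intro: sized_chunks)
    ultimately show ?thesis using that x y by (auto dest: fill_determines_vD[OF G])
  qed
  have "image_mset (rv_of_gv \<circ> fst) ?xs = image_mset (rv_of_gv \<circ> fst) ?ys"
    using fills by (rule image_mset_eq_factor) (metis agree comp_apply)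
  then have "rs_of_gs g = rs_of_gs g'"
    using g g' by (simp only: mset_map[symmetric] map_map[symmetric] map_fst_zip length_chunks rs_of_gs.simps)
  moreover have "mset (w ! i) = mset (w' ! i)" if "i < k" for i
  proof -
    have "image_mset ((\<lambda>u. mset (u ! i)) \<circ> snd) ?xs = image_mset ((\<lambda>u. mset (u ! i)) \<circ> snd) ?ys"
      using fills by (rule image_mset_eq_factor) (metis agree that comp_apply)
    then have "(\<Sum>u\<leftarrow>chunks gs w. mset (u ! i)) = (\<Sum>v\<leftarrow>chunks gs' w'. mset (v ! i))"
      by (simp only: mset_map[symmetric] map_map[symmetric] map_snd_zip length_chunks flip: sum_mset_sum_list)
    then show ?thesis using w w' g g' that by (metis mset_nth_eq_sum_chunks)
  qed
  ultimately show "rs_of_gs g = rs_of_gs g' \<and> (\<forall>i<k. mset (w ! i) = mset (w' ! i))" by blast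
qed

lemma fill_determines_taylor: "fill_determines_s k (rs_of_gs -` taylor C)"
proof (induction C)
  case (LVar x)
  have "rs_of_gs -` taylor (LVar x) \<subseteq> GList ` lists (rv_of_gv -` {RVar x})"
    by (auto intro!: rs_of_gs_eq_RBagD split: if_splits)
  also have "rv_of_gv -` {RVar x} = {GVar x}" by auto
  finally show ?case
    by (rule fill_determines_s_subset[OF _ fill_determines_GList[OF fill_determines_GVar]])
next
  case (LHole j)
  have "rs_of_gs -` taylor (LHole j) \<subseteq> GList ` lists (rv_of_gv -` {RHole j})"
    by (auto intro!: rs_of_gs_eq_RBagD split: if_splits)
  also have "rv_of_gv -` {RHole j} = {GHole j}" by auto
  finally show ?case
    by (rule fill_determines_s_subset[OF _ fill_determines_GList[OF fill_determines_GHole]])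
next
  case (LLam M)
  have "rs_of_gs -` taylor (LLam M) \<subseteq> GList ` lists (rv_of_gv -` (RLam ` taylor M))"
    by (auto intro!: rs_of_gs_eq_RBagD imageI)
  also have "rv_of_gv -` (RLam ` taylor M) = GLam ` (rs_of_gs -` taylor M)"
    by auto
  finally show ?case
    by (rule fill_determines_s_subset[OF _ fill_determines_GList[OF fill_determines_GLam[OF LLam.IH]]])
next
  case (LApp M N)
  have "rs_of_gs -` taylor (LApp M N) \<subseteq> case_prod GApp ` (rs_of_gs -` taylor M \<times> rs_of_gs -` taylor N)"
  proof
    fix g assume "g \<in> rs_of_gs -` taylor (LApp M N)"
    then show "g \<in> case_prod GApp ` (rs_of_gs -` taylor M \<times> rs_of_gs -` taylor N)"
      by (cases g) auto
  qed
  then show ?case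
    using fill_determines_GApp[OF LApp.IH] fill_determines_s_subset by blast
qed

theorem mainTheorem1:
  fixes C :: lctx and k :: nat and c1 c2 :: rsim and g1 g2 :: gsim
    and vs us :: "rval list list"
  assumes "lholes C \<subseteq> {..<k}"
    and "c1 \<in> taylor C" and "c2 \<in> taylor C"
    and "rigid_s g1 c1" and "rigid_s g2 c2"
    and "length vs = k" and "length us = k"
    and "\<forall>i<k. length (vs ! i) = deg i c1 \<and> (\<forall>v\<in>set (vs ! i). resource_value v)"
    and "\<forall>i<k. length (us ! i) = deg i c2 \<and> (\<forall>u\<in>set (us ! i). resource_value u)"
    and "fill_s g1 vs = fill_s g2 us"
  shows "c1 = c2 \<and> (\<forall>i<k. mset (vs ! i) = mset (us ! i))"
proof -
  have c: "c1 = rs_of_gs g1" "c2 = rs_of_gs g2"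
    using assms(4,5) by (simp_all add: rigid_eq_rs_of_gs)
  have "sized k (\<lambda>i. gs_deg i g1) vs" "sized k (\<lambda>i. gs_deg i g2) us"
    using assms(4-9) by (simp_all add: sized_def deg_rigid)
  then show ?thesis
    using fill_determines_sD[OF fill_determines_taylor, of g1 C g2 k vs us] assms(2,3,10) c by simp
qed

end
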